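(* Let $H$ be a complex Hilbert space with $\dim H\geq 2$, $\mathcal{A}\subseteq\mathcal{B}(H)$ a standard operator algebra, $r,s$ nonnegative integers with $r+s\geq1$, and $A\in\mathcal{A}$ nonzero. The following are equivalent: (1) $A$ has rank one; (2) for every $B\in\mathcal{A}$, $\sigma_\pi(B^rA^*B^s)$ is a singleton; (3) for every $B\in\mathcal{A}$ with $\operatorname{rank}(B)\leq2$, $\sigma_\pi(B^rA^*B^s)$ is a singleton.
   Context: A standard operator algebra on a complex Hilbert space $H$ is a subalgebra of $\mathcal{B}(H)$ containing all finite rank operators; it need not be closed or unital. $A^*$ is the Hilbert-space adjoint. The peripheral spectrum of $T$ is $\sigma_\pi(T)=\{z\in\sigma(T):|z|=r(T)\}$, where $r(T)$ is the spectral radius. *)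

theory Defs
  imports "HOL-Analysis.Analysis"
begin

text \<open>A complex Hilbert space, encoded as a real Hilbert space together with a
  complex structure (multiplication by the imaginary unit) which is a real-linear
  isometry squaring to minus the identity.\<close>
class chilbert = real_inner + complete_space +
  fixes imult :: "'a \<Rightarrow> 'a"
  assumes imult_add: "imult (x + y) = imult x + imult y"
    and imult_scaleR: "imult (a *\<^sub>R x) = a *\<^sub>R imult x"
    and imult_imult: "imult (imult x) = - x"
    and imult_inner: "inner (imult x) (imult y) = inner x y"

definition cscale :: "complex \<Rightarrow> 'a::chilbert \<Rightarrow> 'a" where
  "cscale c x = Re c *\<^sub>R x + Im c *\<^sub>R imult x"

text \<open>Complex inner product (linear in the first argument).\<close>
definition cinner :: "'a::chilbert \<Rightarrow> 'a \<Rightarrow> complex" where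
  "cinner x y = Complex (inner x y) (inner x (imult y))"

text \<open>Bounded (complex-)linear operators, i.e. elements of B(H).\<close>
definition bop :: "('a::chilbert \<Rightarrow> 'a) \<Rightarrow> bool" where
  "bop T \<longleftrightarrow> bounded_linear T \<and> (\<forall>x. T (imult x) = imult (T x))"

definition cadj :: "('a::chilbert \<Rightarrow> 'a) \<Rightarrow> ('a \<Rightarrow> 'a)" where
  "cadj T = (THE S. bop S \<and> (\<forall>x y. cinner (T x) y = cinner x (S y)))"

definition cspan :: "'a::chilbert set \<Rightarrow> 'a set" where
  "cspan S = {x. \<exists>F c. finite F \<and> F \<subseteq> S \<and> x = (\<Sum>v\<in>F. cscale (c v) v)}"

text \<open>Rank (complex dimension of the range), infinite if not finite.\<close>
definition crank :: "('a::chilbert \<Rightarrow> 'a) \<Rightarrow> enat" where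
  "crank T = Inf {enat (card F) | F. finite F \<and> range T \<subseteq> cspan F}"

definition cspectrum :: "('a::chilbert \<Rightarrow> 'a) \<Rightarrow> complex set" where
  "cspectrum T = {w. \<not> (\<exists>S. bop S \<and> (\<forall>x. S (T x - cscale w x) = x)
                                   \<and> (\<forall>x. T (S x) - cscale w (S x) = x))}"

definition spec_radius :: "('a::chilbert \<Rightarrow> 'a) \<Rightarrow> real" where
  "spec_radius T = Sup (cmod ` cspectrum T)"

definition periph_spectrum :: "('a::chilbert \<Rightarrow> 'a) \<Rightarrow> complex set" where
  "periph_spectrum T = {z \<in> cspectrum T. cmod z = spec_radius T}"

text \<open>Standard operator algebra: a subalgebra of B(H) (not necessarily closed
  or unital) containing all finite rank operators.\<close>
definition standard_op_alg :: "('a::chilbert \<Rightarrow> 'a) set \<Rightarrow> bool" where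
  "standard_op_alg \<A> \<longleftrightarrow>
     (\<forall>T\<in>\<A>. bop T) \<and>
     (\<forall>S\<in>\<A>. \<forall>T\<in>\<A>. (\<lambda>x. S x + T x) \<in> \<A>) \<and>
     (\<forall>c. \<forall>T\<in>\<A>. (\<lambda>x. cscale c (T x)) \<in> \<A>) \<and>
     (\<forall>S\<in>\<A>. \<forall>T\<in>\<A>. S \<circ> T \<in> \<A>) \<and>
     (\<forall>T. bop T \<and> crank T < \<infinity> \<longrightarrow> T \<in> \<A>)"

end

theory Submission
  imports Defs "HOL-Computational_Algebra.Polynomial"
begin

text \<open>
  If \<open>A\<close> has rank one, so do \<open>A\<^sup>*\<close> and every \<open>T = B\<^sup>r A\<^sup>* B\<^sup>s\<close>. A rank-one operator satisfies
  \<open>T\<^sup>2 = \<mu> T\<close>, so \<open>\<sigma>(T) \<subseteq> {0, \<mu>}\<close> and \<open>\<mu>\<close> is the only point of the peripheral spectrum; when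
  \<open>\<mu> = 0\<close>, \<open>\<sigma>(T) = {0}\<close> because \<open>T\<close> is not surjective on a space of dimension at least two.

  Conversely, if \<open>A\<close>, hence \<open>C = A\<^sup>*\<close>, has rank at least two, choose \<open>x\<^sub>1, x\<^sub>2\<close> with \<open>C x\<^sub>1, C x\<^sub>2\<close>
  independent, functionals \<open>g\<^sub>1, g\<^sub>2\<close> for which both pairings \<open>(\<langle>x\<^sub>j, g\<^sub>i\<rangle>)\<close> and
  \<open>(\<langle>C x\<^sub>j, g\<^sub>i\<rangle>)\<close> are nondegenerate, and a biorthogonal basis \<open>u\<^sub>1, u\<^sub>2\<close> of
  \<open>span {x\<^sub>1, x\<^sub>2}\<close>. Let \<open>B = \<alpha> \<langle>\<cdot>, g\<^sub>1\<rangle> u\<^sub>1 + \<beta> \<langle>\<cdot>, g\<^sub>2\<rangle> u\<^sub>2\<close>, of rank at most two. By Jacobson's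
  lemma \<open>B\<^sup>r C B\<^sup>s\<close> has the nonzero spectrum of \<open>B\<^sup>r\<^sup>+\<^sup>s C\<close>, which acts on \<open>span {u\<^sub>1, u\<^sub>2}\<close> by the
  matrix \<open>diag(\<alpha>\<^sup>r\<^sup>+\<^sup>s, \<beta>\<^sup>r\<^sup>+\<^sup>s) G\<close> with \<open>G = (\<langle>C u\<^sub>j, g\<^sub>i\<rangle>)\<close> invertible. Choosing \<open>\<alpha>, \<beta>\<close> so that
  this matrix has two distinct eigenvalues of equal modulus makes the peripheral spectrum a
  two-point set.

  The adjoint is obtained from the Riesz representation theorem, which is proved via the point of
  minimal norm on the hyperplane \<open>f = 1\<close>.
\<close>

section \<open>The complex structure\<close>

lemma imult_zero [simp]: "imult 0 = 0"
  using imult_scaleR[of 0 0] by simp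

lemma imult_diff: "imult (x - y) = imult x - imult y"
  using imult_add[of x "- y"] imult_scaleR[of "-1" y] by simp

lemma inner_imult_left: "inner (imult x) y = - inner x (imult y)"
  using imult_inner[of "imult x" y] by (simp add: imult_imult)

lemma inner_imult_self [simp]: "inner x (imult x) = 0"
  using inner_imult_left[of x x] by (simp add: inner_commute)

lemma bounded_linear_imult: "bounded_linear imult"
  by (rule bounded_linear_intro[of _ 1])
     (auto simp: imult_add imult_scaleR norm_eq_sqrt_inner imult_inner)

lemma cscale_add_right: "cscale c (x + y) = cscale c x + cscale c y"
  by (simp add: cscale_def imult_add algebra_simps)

lemma cscale_mult: "cscale a (cscale b x) = cscale (a * b) x"
  by (simp add: cscale_def imult_add imult_scaleR imult_imult algebra_simps)

lemma cscale_one [simp]: "cscale 1 x = x"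
  by (simp add: cscale_def)

lemma cscale_zero_left [simp]: "cscale 0 x = 0"
  by (simp add: cscale_def)

lemma cscale_zero_right [simp]: "cscale c 0 = 0"
  by (simp add: cscale_def)

lemma cscale_ii: "cscale \<i> x = imult x"
  by (simp add: cscale_def)

lemma imult_cscale: "imult (cscale c x) = cscale c (imult x)"
  by (simp add: cscale_def imult_add imult_scaleR)

lemma cscale_minus_left: "cscale (- c) x = - cscale c x"
  by (simp add: cscale_def)

lemma cscale_minus_right: "cscale c (- x) = - cscale c x"
  using imult_scaleR[of "-1" x] by (simp add: cscale_def)

lemma cscale_diff_right: "cscale c (x - y) = cscale c x - cscale c y"
  by (simp add: cscale_def imult_diff algebra_simps)

lemma cscale_eq_0_iff [simp]: "cscale c x = 0 \<longleftrightarrow> c = 0 \<or> x = 0"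
proof
  assume "cscale c x = 0"
  then have "cscale (inverse c) (cscale c x) = 0" by simp
  then show "c = 0 \<or> x = 0" by (cases "c = 0") (auto simp: cscale_mult)
qed auto

lemma bounded_linear_cscale: "bounded_linear (cscale c)"
  unfolding cscale_def[abs_def]
  by (intro bounded_linear_add bounded_linear_scaleR_right bounded_linear_ident
      bounded_linear_compose[OF bounded_linear_scaleR_right bounded_linear_imult])

lemma cinner_add_left: "cinner (x + y) z = cinner x z + cinner y z"
  by (simp add: cinner_def inner_add_left complex_eq_iff)

lemma cinner_diff_left: "cinner (x - y) z = cinner x z - cinner y z"
  by (simp add: cinner_def inner_diff_left complex_eq_iff)

lemma cinner_diff_right: "cinner z (x - y) = cinner z x - cinner z y"
  by (simp add: cinner_def inner_diff_right imult_diff complex_eq_iff)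

lemma cinner_add_right: "cinner z (x + y) = cinner z x + cinner z y"
  by (simp add: cinner_def inner_add_right imult_add complex_eq_iff)

lemma cinner_zero_left [simp]: "cinner 0 z = 0"
  by (simp add: cinner_def complex_eq_iff)

lemma cinner_zero_right [simp]: "cinner z 0 = 0"
  by (simp add: cinner_def complex_eq_iff)

lemma cinner_scale_left: "cinner (cscale c x) y = c * cinner x y"
  by (simp add: cinner_def cscale_def inner_add_left inner_imult_left complex_eq_iff
      algebra_simps imult_inner imult_imult)

lemma cinner_scale_right: "cinner x (cscale c y) = cnj c * cinner x y"
  by (simp add: cinner_def cscale_def inner_add_right imult_add imult_scaleR imult_imult
      complex_eq_iff algebra_simps)

lemma cinner_commute: "cinner y x = cnj (cinner x y)"
  using inner_imult_left[of x y] by (simp add: cinner_def complex_eq_iff inner_commute)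

lemma cinner_self: "cinner x x = of_real ((norm x)\<^sup>2)"
  by (simp add: cinner_def complex_eq_iff power2_norm_eq_inner)

lemma cinner_self_eq_0 [simp]: "cinner x x = 0 \<longleftrightarrow> x = 0"
  by (simp add: cinner_self)

lemma cnj_cinner_self [simp]: "cnj (cinner x x) = cinner x x"
  by (simp add: cinner_self)

lemma cinner_ext:
  assumes "\<And>z. cinner x z = cinner y z"
  shows "x = y"
  using assms[of "x - y"] cinner_self_eq_0[of "x - y"] by (simp add: cinner_diff_left)

lemma cinner_ext':
  assumes "\<And>z. cinner z x = cinner z y"
  shows "x = y"
  using assms by (intro cinner_ext) (metis cinner_commute)

lemma norm_cscale: "norm (cscale c x) = cmod c * norm x"
proof -
  have "(norm (cscale c x))\<^sup>2 = inner (cscale c x) (cscale c x)"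
    by (simp add: power2_norm_eq_inner)
  also have "\<dots> = ((Re c)\<^sup>2 + (Im c)\<^sup>2) * (norm x)\<^sup>2"
    by (simp add: cscale_def inner_add_left inner_add_right imult_inner power2_norm_eq_inner
        algebra_simps power2_eq_square inner_commute[of "imult x" x])
       (simp add: dot_square_norm power2_eq_square)
  also have "\<dots> = (cmod c * norm x)\<^sup>2" by (simp add: cmod_def power_mult_distrib)
  finally show ?thesis by (simp add: power2_eq_iff_nonneg)
qed

lemma cmod_cinner_le: "cmod (cinner x y) \<le> norm x * norm y"
proof (cases "cinner x y = 0")
  case False
  define w where "w = cnj (cinner x y) / of_real (cmod (cinner x y))"
  have "w * cinner x y = of_real (cmod (cinner x y))"
    using False by (simp add: w_def field_simps)
       (metis complex_norm_square of_real_mult power2_eq_square)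
  then have "cmod (cinner x y) = inner (cscale w x) y"
    by (metis Re_complex_of_real cinner_def cinner_scale_left complex.sel(1))
  also have "\<dots> \<le> norm (cscale w x) * norm y" by (rule norm_cauchy_schwarz)
  also have "\<dots> = norm x * norm y"
    using False by (simp add: norm_cscale w_def norm_divide)
  finally show ?thesis .
qed simp

section \<open>Bounded operators and the adjoint\<close>

lemma bopD:
  assumes "bop T"
  shows bop_add: "T (x + y) = T x + T y"
    and bop_diff: "T (x - y) = T x - T y"
    and bop_zero: "T 0 = 0"
    and bop_cscale: "T (cscale c x) = cscale c (T x)"
proof -
  interpret bounded_linear T using assms by (simp add: bop_def)
  show "T (x + y) = T x + T y" "T (x - y) = T x - T y" "T 0 = 0"
    by (simp_all add: add diff)
  show "T (cscale c x) = cscale c (T x)"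
    using assms by (simp add: cscale_def add scale bop_def)
qed

lemma bop_ident [simp]: "bop (\<lambda>x. x)"
  by (simp add: bop_def bounded_linear_ident)

lemma bop_comp: "bop S \<Longrightarrow> bop T \<Longrightarrow> bop (S \<circ> T)"
  by (auto simp: bop_def o_def intro: bounded_linear_compose)

lemma bop_comp': "bop S \<Longrightarrow> bop T \<Longrightarrow> bop (\<lambda>x. S (T x))"
  using bop_comp[of S T] by (simp add: comp_def)

lemma bop_add_op: "bop S \<Longrightarrow> bop T \<Longrightarrow> bop (\<lambda>x. S x + T x)"
  by (auto simp: bop_def bounded_linear_add imult_add)

lemma bop_diff_op: "bop S \<Longrightarrow> bop T \<Longrightarrow> bop (\<lambda>x. S x - T x)"
  by (auto simp: bop_def bounded_linear_sub imult_diff)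

lemma bop_cscale_op: "bop T \<Longrightarrow> bop (\<lambda>x. cscale c (T x))"
  by (auto simp: bop_def imult_cscale intro: bounded_linear_compose[OF bounded_linear_cscale])

lemma bop_funpow: "bop T \<Longrightarrow> bop (T ^^ n)"
  by (induction n) (auto simp: bop_comp bop_ident[unfolded id_def[symmetric]])

lemma bop_rank_one_op: "bop (\<lambda>x. cscale (cinner x g) u)"
proof -
  have cinner_g: "bounded_linear (\<lambda>x. cinner x g)"
  proof (rule bounded_linear_intro[of _ "norm g"])
    show "cinner (r *\<^sub>R x) g = r *\<^sub>R cinner x g" for r x
      using cinner_scale_left[of "of_real r" x g] by (simp add: scaleR_conv_of_real cscale_def)
  qed (simp_all add: cinner_add_left cmod_cinner_le)
  have "bounded_linear (\<lambda>x. Re (cinner x g) *\<^sub>R u + Im (cinner x g) *\<^sub>R imult u)"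
    by (intro bounded_linear_add
        bounded_linear_compose[OF bounded_linear_scaleR_left
          bounded_linear_compose[OF bounded_linear_Re cinner_g]]
        bounded_linear_compose[OF bounded_linear_scaleR_left
          bounded_linear_compose[OF bounded_linear_Im cinner_g]])
  moreover have "cscale (cinner (imult x) g) u = imult (cscale (cinner x g) u)" for x
    by (simp add: cscale_ii[symmetric] cinner_scale_left cscale_mult imult_cscale[symmetric]
        mult.commute)
  ultimately show ?thesis by (simp add: bop_def cscale_def)
qed

lemma Cauchy_minimizing_sequence:
  fixes X :: "nat \<Rightarrow> 'a::real_inner"
  assumes "convex S" "\<And>n. X n \<in> S" "\<And>y. y \<in> S \<Longrightarrow> d \<le> norm y" "0 \<le> d"
    and X_norm: "\<And>n. (norm (X n))\<^sup>2 < d\<^sup>2 + 1 / real (Suc n)"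
  shows "Cauchy X"
proof -
  have dist_X: "(dist (X m) (X n))\<^sup>2 \<le> 2 / real (Suc m) + 2 / real (Suc n)" for m n
  proof -
    \<comment> \<open>The midpoint lies in \<open>S\<close>, so the parallelogram law bounds the distance.\<close>
    have "(1/2) *\<^sub>R X m + (1/2) *\<^sub>R X n \<in> S"
      using assms(1,2) by (intro convexD) auto
    then have "d \<le> norm ((1/2) *\<^sub>R (X m + X n))"
      by (metis assms(3) scaleR_add_right)
    then have "(2 * d)\<^sup>2 \<le> (norm (X m + X n))\<^sup>2"
      using assms(4) by (intro power_mono) auto
    moreover have "(norm (X m - X n))\<^sup>2 + (norm (X m + X n))\<^sup>2
                     = 2 * (norm (X m))\<^sup>2 + 2 * (norm (X n))\<^sup>2"
      by (simp add: power2_norm_eq_inner inner_add_left inner_add_right inner_diff_left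
          inner_diff_right inner_commute[of "X n" "X m"])
    ultimately show ?thesis
      using X_norm[of m] X_norm[of n] by (simp add: dist_norm power_mult_distrib)
  qed
  show "Cauchy X"
  proof (rule metric_CauchyI)
    fix e :: real
    assume "0 < e"
    then obtain M where M: "inverse (real (Suc M)) < e\<^sup>2 / 4"
      using reals_Archimedean[of "e\<^sup>2 / 4"] by auto
    have "dist (X m) (X n) < e" if "M \<le> m" "M \<le> n" for m n
    proof -
      have "2 / real (Suc m) \<le> 2 * inverse (real (Suc M))"
           "2 / real (Suc n) \<le> 2 * inverse (real (Suc M))"
        using that by (simp_all add: divide_simps)
      then have "(dist (X m) (X n))\<^sup>2 < e\<^sup>2"
        using dist_X[of m n] M by linarith
      then show ?thesis
        using \<open>0 < e\<close> by (simp add: power_less_imp_less_base)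
    qed
    then show "\<exists>M. \<forall>m\<ge>M. \<forall>n\<ge>M. dist (X m) (X n) < e" by blast
  qed
qed

lemma min_norm_point_exists:
  fixes S :: "'a::{real_inner, complete_space} set"
  assumes "convex S" "closed S" "S \<noteq> {}"
  obtains x0 where "x0 \<in> S" "\<And>y. y \<in> S \<Longrightarrow> norm x0 \<le> norm y"
proof -
  define d where "d = Inf (norm ` S)"
  have d_le: "d \<le> norm y" if "y \<in> S" for y
    unfolding d_def using that by (intro cInf_lower bdd_belowI[of _ 0]) auto
  have d_nonneg: "0 \<le> d"
    unfolding d_def using assms(3) by (intro cInf_greatest) auto
  have "\<exists>x\<in>S. (norm x)\<^sup>2 < d\<^sup>2 + 1 / real (Suc n)" for n
  proof -
    have "Inf (norm ` S) < sqrt (d\<^sup>2 + 1 / real (Suc n))"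
      using d_nonneg by (simp add: d_def[symmetric] real_less_rsqrt)
    then obtain x where "x \<in> S" "norm x < sqrt (d\<^sup>2 + 1 / real (Suc n))"
      using cInf_lessD[of "norm ` S"] assms(3) by blast
    then show ?thesis
      using power_strict_mono[of "norm x" "sqrt (d\<^sup>2 + 1 / real (Suc n))" 2] by auto
  qed
  then obtain X where X: "\<And>n. X n \<in> S" "\<And>n. (norm (X n))\<^sup>2 < d\<^sup>2 + 1 / real (Suc n)"
    by (metis (no_types))
  then have "Cauchy X"
    using assms(1) d_le d_nonneg by (intro Cauchy_minimizing_sequence)
  then obtain x0 where lim: "X \<longlonglongrightarrow> x0"
    using Cauchy_convergent convergent_def by blast
  have "x0 \<in> S"
    using assms(2) X(1) lim by (rule closed_sequentially)
  moreover have "(norm x0)\<^sup>2 \<le> d\<^sup>2"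
  proof (rule LIMSEQ_le)
    show "(\<lambda>n. (norm (X n))\<^sup>2) \<longlonglongrightarrow> (norm x0)\<^sup>2"
      by (intro tendsto_intros lim)
    show "(\<lambda>n. d\<^sup>2 + 1 / real (Suc n)) \<longlonglongrightarrow> d\<^sup>2"
      using tendsto_add[OF tendsto_const LIMSEQ_Suc[OF lim_inverse_n']] by simp
    show "\<exists>N. \<forall>n\<ge>N. (norm (X n))\<^sup>2 \<le> d\<^sup>2 + 1 / real (Suc n)"
      using X(2) less_imp_le by blast
  qed
  then have "norm x0 \<le> d"
    using d_nonneg by (simp add: power2_le_iff_abs_le)
  ultimately show thesis
    using that d_le by force
qed

lemma riesz_representation_real:
  fixes f :: "'a::{real_inner, complete_space} \<Rightarrow> real"
  assumes "bounded_linear f"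
  obtains w where "\<And>x. f x = inner x w"
proof (cases "\<forall>x. f x = 0")
  case True
  then show thesis by (intro that[of 0]) simp
next
  case False
  interpret f: bounded_linear f by (rule assms)
  obtain x1 where "f x1 \<noteq> 0" using False by auto
  then have "{x. f x = 1} \<noteq> {}"
    by (auto intro!: exI[of _ "(1 / f x1) *\<^sub>R x1"] simp: f.scale)
  moreover have "convex {x. f x = 1}"
    by (rule convexI) (simp add: f.add f.scale)
  moreover have "closed {x. f x = 1}"
    using linear_continuous_on[OF assms] by (intro closed_Collect_eq) simp_all
  ultimately obtain x0 where "x0 \<in> {x. f x = 1}"
    and min: "\<And>y. y \<in> {x. f x = 1} \<Longrightarrow> norm x0 \<le> norm y"
    using min_norm_point_exists by metis
  then have x0: "f x0 = 1" by simp
  \<comment> \<open>The minimal-norm point of the hyperplane \<open>f = 1\<close> is orthogonal to the kernel of \<open>f\<close>.\<close>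
  have orth: "inner x0 k = 0" if "f k = 0" for k
  proof (cases "k = 0")
    case False
    define t where "t = - inner x0 k / inner k k"
    have "f (x0 + t *\<^sub>R k) = 1" using x0 that by (simp add: f.add f.scale)
    then have "(norm x0)\<^sup>2 \<le> (norm (x0 + t *\<^sub>R k))\<^sup>2" by (simp add: min power_mono)
    also have "\<dots> = inner x0 x0 + 2 * t * inner x0 k + t * t * inner k k"
      by (simp add: power2_norm_eq_inner inner_add_left inner_add_right inner_commute[of k x0]
          algebra_simps)
    also have "\<dots> = inner x0 x0 - (inner x0 k)\<^sup>2 / inner k k"
      using False by (simp add: t_def field_simps power2_eq_square)
    finally have "(inner x0 k)\<^sup>2 / inner k k \<le> 0" by (simp add: power2_norm_eq_inner)
    moreover have "inner k k > 0" using False by simp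
    ultimately show ?thesis by (simp add: divide_le_0_iff)
  qed simp
  show thesis
  proof (rule that)
    fix x
    have "inner x0 (x - f x *\<^sub>R x0) = 0" using x0 by (intro orth) (simp add: f.diff f.scale)
    then show "f x = inner x ((1 / inner x0 x0) *\<^sub>R x0)"
      using x0 by (auto simp: inner_diff_right inner_commute[of x x0])
  qed
qed

lemma real_adjoint_exists:
  fixes T :: "'a::{real_inner, complete_space} \<Rightarrow> 'a"
  assumes "bounded_linear T"
  obtains S where "bounded_linear S" "\<And>x y. inner (T x) y = inner x (S y)"
proof -
  interpret T: bounded_linear T by (rule assms)
  have "\<exists>w. \<forall>x. inner (T x) y = inner x w" for y
    using riesz_representation_real[OF bounded_linear_compose[OF bounded_linear_inner_left assms]]
    by metis
  then obtain S where S: "\<And>x y. inner (T x) y = inner x (S y)" by metis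
  have S_eqI: "S y = v" if "\<And>x. inner x (S y) = inner x v" for y v
  proof -
    have "inner (S y - v) (S y - v) = 0" using that[of "S y - v"] by (simp add: inner_diff_right)
    then show ?thesis by simp
  qed
  obtain K where K: "\<And>x. norm (T x) \<le> norm x * K" "K > 0" using T.pos_bounded by blast
  have "norm (S y) \<le> norm y * K" for y
  proof -
    have "(norm (S y))\<^sup>2 = inner (T (S y)) y" by (simp add: S power2_norm_eq_inner)
    also have "\<dots> \<le> norm (T (S y)) * norm y" by (rule norm_cauchy_schwarz)
    also have "\<dots> \<le> norm (S y) * K * norm y" using K by (simp add: mult_right_mono)
    finally have "norm (S y) * norm (S y) \<le> norm (S y) * (norm y * K)"
      by (simp add: power2_eq_square mult_ac)
    then show ?thesis using K(2) by (cases "S y = 0") simp_all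
  qed
  moreover have "S (y + z) = S y + S z" for y z
    by (rule S_eqI) (simp add: S[symmetric] inner_add_right)
  moreover have "S (r *\<^sub>R y) = r *\<^sub>R S y" for r y
    by (rule S_eqI) (simp add: S[symmetric])
  ultimately have "bounded_linear S"
    by (intro bounded_linear_intro[of S K])
  then show thesis using S by (rule that)
qed

lemma adjoint_exists:
  assumes T: "bop T"
  shows "\<exists>S. bop S \<and> (\<forall>x y. cinner (T x) y = cinner x (S y))"
proof -
  obtain S where S_bl: "bounded_linear S" and S: "\<And>x y. inner (T x) y = inner x (S y)"
    using real_adjoint_exists T unfolding bop_def by blast
  have S_imult: "S (imult y) = imult (S y)" for y
  proof -
    have "inner x (S (imult y)) = inner x (imult (S y))" for x
    proof -
      have "inner x (S (imult y)) = - inner (imult (T x)) y"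
        by (simp add: S[symmetric] inner_imult_left)
      also have "\<dots> = - inner (T (imult x)) y"
        using T by (simp add: bop_def)
      also have "\<dots> = - inner (imult x) (S y)"
        by (simp only: S)
      finally show ?thesis
        by (simp add: inner_imult_left)
    qed
    from this[of "S (imult y) - imult (S y)"]
    have "inner (S (imult y) - imult (S y)) (S (imult y) - imult (S y)) = 0"
      by (simp only: inner_diff_right[of "S (imult y) - imult (S y)"] diff_self)
    then show ?thesis by simp
  qed
  have "bop S" using S_bl S_imult by (simp add: bop_def)
  moreover have "cinner (T x) y = cinner x (S y)" for x y
    by (simp add: cinner_def S S_imult[symmetric])
  ultimately show ?thesis by blast
qed

lemma
  assumes "bop T"
  shows bop_cadj: "bop (cadj T)"
    and cinner_cadj: "cinner (T x) y = cinner x (cadj T y)"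
proof -
  have "\<exists>!S. bop S \<and> (\<forall>x y. cinner (T x) y = cinner x (S y))"
  proof (rule ex_ex1I)
    show "\<exists>S. bop S \<and> (\<forall>x y. cinner (T x) y = cinner x (S y))"
      by (rule adjoint_exists[OF assms])
  next
    fix S1 S2
    assume "bop S1 \<and> (\<forall>x y. cinner (T x) y = cinner x (S1 y))"
      and "bop S2 \<and> (\<forall>x y. cinner (T x) y = cinner x (S2 y))"
    then have "S1 y = S2 y" for y by (intro cinner_ext') auto
    then show "S1 = S2" by auto
  qed
  then have "bop (cadj T) \<and> (\<forall>x y. cinner (T x) y = cinner x (cadj T y))"
    unfolding cadj_def by (rule theI')
  then show "bop (cadj T)" "cinner (T x) y = cinner x (cadj T y)" by auto
qed

section \<open>Rank\<close>

definition rank_le_one :: "('a::chilbert \<Rightarrow> 'a) \<Rightarrow> bool" where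
  "rank_le_one T \<longleftrightarrow> (\<exists>b. \<forall>x. \<exists>c. T x = cscale c b)"

lemma cspan_empty [simp]: "cspan {} = {0}"
  by (auto simp: cspan_def intro: exI[of _ "{}"])

lemma cspan_singleton: "x \<in> cspan {b} \<longleftrightarrow> (\<exists>c. x = cscale c b)"
proof
  assume "x \<in> cspan {b}"
  then obtain F c where "F \<subseteq> {b}" "x = (\<Sum>v\<in>F. cscale (c v) v)"
    by (auto simp: cspan_def)
  moreover have "F = {} \<or> F = {b}" using \<open>F \<subseteq> {b}\<close> by blast
  ultimately show "\<exists>c. x = cscale c b"
    by (metis cscale_zero_left empty_iff sum.empty sum.insert finite.emptyI add_0_right)
next
  assume "\<exists>c. x = cscale c b"
  then show "x \<in> cspan {b}"
    unfolding cspan_def by (auto intro!: exI[of _ "{b}"])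
qed

lemma cspan_pair: "cscale a u + cscale b v \<in> cspan {u, v}"
proof (cases "u = v")
  case True
  have "cscale a u + cscale b u = cscale (a + b) u"
    by (simp add: cscale_def algebra_simps)
  then show ?thesis
    using True cspan_singleton[of _ u] by auto
next
  case False
  then show ?thesis
    unfolding cspan_def
    by (intro CollectI exI[of _ "{u, v}"] exI[of _ "\<lambda>w. if w = u then a else b"]) simp
qed

lemma crank_le_card:
  assumes "finite F" "range T \<subseteq> cspan F"
  shows "crank T \<le> enat (card F)"
  unfolding crank_def by (rule Inf_lower) (use assms in blast)

lemma crank_le_2:
  assumes "\<And>x. \<exists>a b. T x = cscale a u + cscale b v"
  shows "crank T \<le> 2"
proof -
  have "T x \<in> cspan {u, v}" for x
    using assms[of x] cspan_pair by auto
  then have "crank T \<le> enat (card {u, v})"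
    by (intro crank_le_card) auto
  also have "\<dots> \<le> 2"
    by (simp add: card_insert_le_m1 numeral_eq_enat)
  finally show ?thesis .
qed

lemma crank_attained:
  assumes "crank T \<noteq> \<infinity>"
  obtains F where "finite F" "range T \<subseteq> cspan F" "crank T = enat (card F)"
proof -
  define M where "M = {enat (card F) | F. finite F \<and> range T \<subseteq> cspan F}"
  have crank_M: "crank T = Inf M" by (simp add: crank_def M_def)
  then have "M \<noteq> {}"
    using assms by (auto simp: top_enat_def)
  then obtain m where "m \<in> M" by blast
  have "crank T = (LEAST x. x \<in> M)"
    using \<open>M \<noteq> {}\<close> by (simp add: crank_M Inf_enat_def)
  also have "\<dots> \<in> M" by (rule LeastI[of "\<lambda>x. x \<in> M", OF \<open>m \<in> M\<close>])
  finally have "crank T \<in> M" .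
  then show thesis
    using that by (auto simp: M_def)
qed

lemma crank_eq_1_iff:
  assumes "T \<noteq> (\<lambda>_. 0)"
  shows "crank T = 1 \<longleftrightarrow> rank_le_one T"
proof
  assume "crank T = 1"
  then obtain F where F: "range T \<subseteq> cspan F" "card F = 1"
    using crank_attained[of T] by (metis one_enat_def enat.inject infinity_ne_i1)
  then obtain b where "F = {b}" by (auto simp: card_Suc_eq)
  with F have "\<forall>x. T x \<in> cspan {b}" by auto
  then show "rank_le_one T"
    unfolding rank_le_one_def cspan_singleton by blast
next
  assume "rank_le_one T"
  then obtain b where "\<And>x. \<exists>c. T x = cscale c b" by (auto simp: rank_le_one_def)
  then have "range T \<subseteq> cspan {b}" by (auto simp: cspan_singleton)
  then have le: "crank T \<le> 1" using crank_le_card[of "{b}" T] by (simp add: one_enat_def)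
  have "crank T \<noteq> 0"
  proof
    assume "crank T = 0"
    then obtain F where "range T \<subseteq> cspan F" "card F = 0" "finite F"
      using crank_attained[of T] by (metis zero_enat_def enat.inject i0_ne_infinity)
    with assms show False by auto
  qed
  with le show "crank T = 1"
    by (cases "crank T") (auto simp: one_enat_def zero_enat_def)
qed

lemma rank_le_one_if_adjoint_rank_le_one:
  assumes adj: "\<And>x y. cinner (A x) y = cinner x (C y)" and A: "bop A" and C: "rank_le_one C"
  shows "rank_le_one A"
proof -
  obtain b where "\<And>y. \<exists>c. C y = cscale c b" using C by (auto simp: rank_le_one_def)
  then obtain g where g: "\<And>y. C y = cscale (g y) b" by metis
  have vanish: "A x = 0" if "cinner x b = 0" for x
  proof (rule cinner_ext)
    show "cinner (A x) y = cinner 0 y" for y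
      using that by (simp add: adj g cinner_scale_right)
  qed
  show ?thesis
  proof (cases "b = 0")
    case True
    then show ?thesis using vanish by (auto simp: rank_le_one_def)
  next
    case False
    have "A x = cscale (cinner x b / cinner b b) (A b)" for x
    proof -
      define k where "k = cinner x b / cinner b b"
      have "cinner (x - cscale k b) b = 0"
        using False by (simp add: cinner_diff_left cinner_scale_left k_def)
      then have "A (x - cscale k b) = 0" by (rule vanish)
      then show ?thesis
        using A by (simp add: bop_diff bop_cscale k_def)
    qed
    then show ?thesis unfolding rank_le_one_def by blast
  qed
qed

lemma rank_le_one_cadj_iff:
  assumes "bop A"
  shows "rank_le_one (cadj A) \<longleftrightarrow> rank_le_one A"
proof
  assume "rank_le_one (cadj A)"
  then show "rank_le_one A"
    using assms by (intro rank_le_one_if_adjoint_rank_le_one[of A "cadj A"] cinner_cadj)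
next
  assume "rank_le_one A"
  moreover have "cinner (cadj A x) y = cinner x (A y)" for x y
    using cinner_cadj[OF assms, of y x] by (metis cinner_commute complex_cnj_cnj)
  ultimately show "rank_le_one (cadj A)"
    using assms by (intro rank_le_one_if_adjoint_rank_le_one[of "cadj A" A] bop_cadj)
qed

lemma rank_le_one_comp:
  assumes "rank_le_one C" "bop X"
  shows "rank_le_one (X \<circ> C \<circ> Y)"
proof -
  obtain b where "\<And>y. \<exists>c. C y = cscale c b" using assms(1) by (auto simp: rank_le_one_def)
  then have "\<exists>c. (X \<circ> C \<circ> Y) x = cscale c (X b)" for x
    using assms(2) by (metis bop_cscale comp_apply)
  then show ?thesis unfolding rank_le_one_def by blast
qed

section \<open>Spectrum\<close>

lemma eigenvalue_in_cspectrum: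
  assumes "bop T" "z \<noteq> 0" "T z = cscale w z"
  shows "w \<in> cspectrum T"
proof -
  have "S 0 = z" if "\<And>x. S (T x - cscale w x) = x" for S
    using that[of z] assms(3) by simp
  then have "\<not> (\<exists>S. bop S \<and> (\<forall>x. S (T x - cscale w x) = x)
                  \<and> (\<forall>x. T (S x) - cscale w (S x) = x))"
    using assms(2) by (metis bop_zero)
  then show ?thesis by (simp add: cspectrum_def)
qed

lemma zero_in_cspectrum_if_not_surj:
  assumes "y \<notin> range T"
  shows "0 \<in> cspectrum T"
proof -
  have "\<not> (\<exists>S. bop S \<and> (\<forall>x. S (T x - cscale 0 x) = x) \<and> (\<forall>x. T (S x) - cscale 0 (S x) = x))"
    using assms by (metis cscale_zero_left diff_zero rangeI)
  then show ?thesis unfolding cspectrum_def by (rule CollectI)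
qed

lemma cspectrum_root_of_cubic_relation:
  assumes T: "bop T"
    and rel: "\<And>x. T (T (T x)) = cscale s (T (T x)) - cscale p (T x)"
    and w: "w \<in> cspectrum T"
  shows "w^3 - s * w\<^sup>2 + p * w = 0"
proof (rule ccontr)
  define q where "q = w^3 - s * w\<^sup>2 + p * w"
  assume "w^3 - s * w\<^sup>2 + p * w \<noteq> 0"
  then have "q \<noteq> 0" by (simp add: q_def)
  \<comment> \<open>\<open>(T - w)(T\<^sup>2 + (w - s) T + (w\<^sup>2 - s w + p)) = -q\<close> modulo the cubic relation, so this
    quadratic in \<open>T\<close> gives the resolvent.\<close>
  define V where "V = (\<lambda>x. T (T x) + cscale (w - s) (T x) + cscale (w\<^sup>2 - s * w + p) x)"
  define S where "S = (\<lambda>x. cscale (- 1 / q) (V x))"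
  have "bop S"
    unfolding S_def V_def
    by (intro bop_cscale_op bop_add_op bop_comp'[OF T T] T bop_ident)
  moreover have "S (T x - cscale w x) = x" for x
  proof -
    have "V (T x - cscale w x) = cscale (- q) x"
      by (rule cinner_ext)
         (use T in \<open>simp add: V_def cinner_add_left cinner_diff_left cinner_scale_left
            bop_diff bop_cscale rel q_def algebra_simps power2_eq_square power3_eq_cube\<close>)
    then show ?thesis using \<open>q \<noteq> 0\<close> by (simp add: S_def cscale_mult)
  qed
  moreover have "T (S x) - cscale w (S x) = x" for x
  proof -
    have "T (V x) - cscale w (V x) = cscale (- q) x"
      by (rule cinner_ext)
         (use T in \<open>simp add: V_def cinner_add_left cinner_diff_left cinner_scale_left
            bop_add bop_cscale rel q_def algebra_simps power2_eq_square power3_eq_cube\<close>)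
    moreover have "T (S x) - cscale w (S x) = cscale (- 1 / q) (T (V x) - cscale w (V x))"
      using T by (simp add: S_def bop_cscale cscale_diff_right cscale_mult mult.commute)
    ultimately show ?thesis
      using \<open>q \<noteq> 0\<close> by (simp add: cscale_mult)
  qed
  ultimately show False using w by (auto simp: cspectrum_def)
qed

lemma cspectrum_comp_commute:
  assumes "bop X" "bop Y" "w \<noteq> 0"
  shows "w \<in> cspectrum (X \<circ> Y) \<longleftrightarrow> w \<in> cspectrum (Y \<circ> X)"
proof -
  \<comment> \<open>Jacobson's lemma: a resolvent \<open>S\<close> of \<open>YX\<close> at \<open>w\<close> yields the resolvent
    \<open>(X S Y - 1) / w\<close> of \<open>XY\<close>.\<close>
  have "w \<notin> cspectrum (X \<circ> Y)" if X: "bop X" and Y: "bop Y" and "w \<notin> cspectrum (Y \<circ> X)"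
    for X Y :: "'a \<Rightarrow> 'a"
  proof -
    obtain S where S: "bop S" "\<And>x. S (Y (X x) - cscale w x) = x"
      "\<And>x. Y (X (S x)) - cscale w (S x) = x"
      using \<open>w \<notin> cspectrum (Y \<circ> X)\<close> by (auto simp: cspectrum_def)
    define S' where "S' = (\<lambda>x. cscale (1 / w) (X (S (Y x)) - x))"
    have "bop S'"
      unfolding S'_def
      by (intro bop_cscale_op bop_diff_op[OF bop_comp'[OF X bop_comp'[OF S(1) Y]] bop_ident])
    moreover have "S' (X (Y x) - cscale w x) = x" for x
    proof -
      have "S (Y (X (Y x) - cscale w x)) = Y x"
        using S(2)[of "Y x"] Y by (simp add: bop_diff bop_cscale)
      then show ?thesis using \<open>w \<noteq> 0\<close> by (simp add: S'_def cscale_diff_right cscale_mult)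
    qed
    moreover have "X (Y (S' x)) - cscale w (S' x) = x" for x
    proof -
      have "Y (X (S (Y x))) = Y x + cscale w (S (Y x))"
        using S(3)[of "Y x"] by (simp add: algebra_simps)
      then have "X (Y (S' x)) = cscale (1/w) (X (Y x) + cscale w (X (S (Y x))) - X (Y x))"
        using X Y by (simp add: S'_def bop_cscale bop_diff bop_add)
      then show ?thesis using \<open>w \<noteq> 0\<close> by (simp add: S'_def cscale_diff_right cscale_mult)
    qed
    ultimately show ?thesis
      by (auto simp: cspectrum_def)
  qed
  then show ?thesis
    using assms(1,2) by blast
qed

lemma periph_spectrum_eqI:
  assumes sub: "cspectrum T \<subseteq> insert 0 Z" and Z: "Z \<subseteq> cspectrum T" "Z \<noteq> {}"
    and rho: "\<And>z. z \<in> Z \<Longrightarrow> cmod z = \<rho>"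
  shows "periph_spectrum T = Z"
proof -
  obtain z0 where "z0 \<in> Z" using Z(2) by auto
  then have "\<rho> \<ge> 0" using rho by force
  have "spec_radius T = \<rho>"
    unfolding spec_radius_def
  proof (rule cSup_eq_maximum)
    show "\<rho> \<in> cmod ` cspectrum T"
      using \<open>z0 \<in> Z\<close> Z(1) rho by force
    show "x \<le> \<rho>" if "x \<in> cmod ` cspectrum T" for x
      using that sub rho \<open>\<rho> \<ge> 0\<close> by auto
  qed
  then have periph: "periph_spectrum T = {z \<in> cspectrum T. cmod z = \<rho>}"
    by (simp add: periph_spectrum_def)
  show ?thesis
  proof (cases "\<rho> = 0")
    case True
    then have "Z = {0}" using rho Z(2) by auto
    then show ?thesis using periph Z(1) True by auto
  next
    case False
    then show ?thesis using periph sub Z(1) rho by auto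
  qed
qed

lemma periph_spectrum_singleton_if_rank_le_one:
  fixes T :: "'a::chilbert \<Rightarrow> 'a"
  assumes T: "bop T" and "rank_le_one T" and dim2: "\<forall>x::'a. \<exists>y. \<forall>c. y \<noteq> cscale c x"
  shows "\<exists>z. periph_spectrum T = {z}"
proof -
  obtain b g where g: "\<And>x. T x = cscale (g x) b"
    using \<open>rank_le_one T\<close> unfolding rank_le_one_def by metis
  \<comment> \<open>\<open>g b\<close> is junk when \<open>b = 0\<close>, i.e. when \<open>T = 0\<close>.\<close>
  define \<mu> where "\<mu> = (if b = 0 then 0 else g b)"
  have T2: "T (T x) = cscale \<mu> (T x)" for x
    using T by (simp add: g[of x] bop_cscale g[of b] \<mu>_def cscale_mult mult.commute)
  have "cspectrum T \<subseteq> {0, \<mu>}"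
  proof
    fix w
    assume "w \<in> cspectrum T"
    moreover have "T (T (T x)) = cscale \<mu> (T (T x)) - cscale 0 (T x)" for x
      using T by (simp add: T2 bop_cscale)
    ultimately have "w\<^sup>2 * (w - \<mu>) = 0"
      using cspectrum_root_of_cubic_relation[OF T]
      by (fastforce simp: algebra_simps power2_eq_square power3_eq_cube)
    then show "w \<in> {0, \<mu>}" by auto
  qed
  moreover have "\<mu> \<in> cspectrum T"
  proof (cases "\<mu> = 0")
    case True
    obtain y where "\<forall>c. y \<noteq> cscale c b" using dim2 by blast
    then have "y \<notin> range T" using g by auto
    then show ?thesis using True zero_in_cspectrum_if_not_surj by blast
  next
    case False
    then have "b \<noteq> 0" "T b = cscale \<mu> b"
      using g[of b] by (auto simp: \<mu>_def split: if_splits)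
    then show ?thesis using eigenvalue_in_cspectrum[OF T] by blast
  qed
  ultimately have "periph_spectrum T = {\<mu>}"
    by (intro periph_spectrum_eqI[where \<rho> = "cmod \<mu>"]) auto
  then show ?thesis by blast
qed

section \<open>Operators of rank two\<close>

definition indep2 :: "'a::chilbert \<Rightarrow> 'a \<Rightarrow> bool" where
  "indep2 u v \<longleftrightarrow> (\<forall>p q. cscale p u + cscale q v = 0 \<longrightarrow> p = 0 \<and> q = 0)"

lemma matrix2_eigenvector_exists:
  fixes m11 m12 m21 m22 \<mu> :: complex
  assumes char: "\<mu>\<^sup>2 - (m11 + m22) * \<mu> + (m11 * m22 - m12 * m21) = 0"
    and not_scalar: "\<not> (m12 = 0 \<and> m21 = 0 \<and> m11 = \<mu> \<and> m22 = \<mu>)"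
  obtains e1 e2 where "e1 \<noteq> 0 \<or> e2 \<noteq> 0"
    "m11 * e1 + m12 * e2 = \<mu> * e1" "m21 * e1 + m22 * e2 = \<mu> * e2"
proof (cases "m12 \<noteq> 0 \<or> \<mu> \<noteq> m11")
  case True
  have "m21 * m12 + m22 * (\<mu> - m11) = \<mu> * (\<mu> - m11)"
    using char by (simp add: algebra_simps power2_eq_square)
  then show thesis
    using True by (intro that[of m12 "\<mu> - m11"]) (auto simp: algebra_simps)
next
  case False
  have "m11 * (\<mu> - m22) + m12 * m21 = \<mu> * (\<mu> - m22)"
    using char False by (simp add: algebra_simps power2_eq_square)
  then show thesis
    using False not_scalar by (intro that[of "\<mu> - m22" m21]) (auto simp: algebra_simps)
qed

lemma bop_apply_pair:
  assumes R: "bop R"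
    and "R u1 = cscale m11 u1 + cscale m21 u2" "R u2 = cscale m12 u1 + cscale m22 u2"
  shows "R (cscale p u1 + cscale q u2)
           = cscale (m11 * p + m12 * q) u1 + cscale (m21 * p + m22 * q) u2"
  by (rule cinner_ext)
     (use assms in \<open>simp add: bop_add bop_cscale cinner_add_left cinner_scale_left algebra_simps\<close>)

lemma eigenvalue_of_pair_operator:
  assumes R: "bop R" and ind: "indep2 u1 u2"
    and Ru: "R u1 = cscale m11 u1 + cscale m21 u2" "R u2 = cscale m12 u1 + cscale m22 u2"
    and mu: "\<mu>1 \<noteq> \<mu>2" "\<mu>1 + \<mu>2 = m11 + m22" "\<mu>1 * \<mu>2 = m11 * m22 - m12 * m21"
  shows "\<mu>1 \<in> cspectrum R"
proof -
  have "\<mu>1\<^sup>2 - (m11 + m22) * \<mu>1 + (m11 * m22 - m12 * m21) = 0"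
    unfolding mu(2)[symmetric] mu(3)[symmetric] by (simp add: power2_eq_square algebra_simps)
  moreover have "\<not> (m12 = 0 \<and> m21 = 0 \<and> m11 = \<mu>1 \<and> m22 = \<mu>1)"
    using mu(1,2) by auto
  ultimately obtain e1 e2 where e: "e1 \<noteq> 0 \<or> e2 \<noteq> 0"
    "m11 * e1 + m12 * e2 = \<mu>1 * e1" "m21 * e1 + m22 * e2 = \<mu>1 * e2"
    by (rule matrix2_eigenvector_exists)
  define v where "v = cscale e1 u1 + cscale e2 u2"
  have "v \<noteq> 0" using ind e(1) by (auto simp: v_def indep2_def)
  moreover have "R v = cscale \<mu>1 v"
    unfolding v_def bop_apply_pair[OF R Ru] e(2,3)
    by (simp add: cscale_add_right cscale_mult)
  ultimately show ?thesis using eigenvalue_in_cspectrum[OF R] by blast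
qed

lemma cspectrum_pair_operator:
  assumes R: "bop R" and ind: "indep2 u1 u2"
    and range: "\<And>x. \<exists>p q. R x = cscale p u1 + cscale q u2"
    and Ru: "R u1 = cscale m11 u1 + cscale m21 u2" "R u2 = cscale m12 u1 + cscale m22 u2"
    and mu: "\<mu>1 \<noteq> \<mu>2" "\<mu>1 + \<mu>2 = m11 + m22" "\<mu>1 * \<mu>2 = m11 * m22 - m12 * m21"
  shows "cspectrum R \<subseteq> {0, \<mu>1, \<mu>2}" "\<mu>1 \<in> cspectrum R" "\<mu>2 \<in> cspectrum R"
proof -
  show "\<mu>1 \<in> cspectrum R"
    by (rule eigenvalue_of_pair_operator[OF R ind Ru mu])
  show "\<mu>2 \<in> cspectrum R"
    by (rule eigenvalue_of_pair_operator[OF R ind Ru]) (use mu in \<open>auto simp: algebra_simps\<close>)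
  \<comment> \<open>Cayley--Hamilton for the \<open>2 \<times> 2\<close> matrix of \<open>R\<close> on its range.\<close>
  have "R (R (R x)) = cscale (m11 + m22) (R (R x)) - cscale (m11 * m22 - m12 * m21) (R x)" for x
  proof -
    obtain p q where pq: "R x = cscale p u1 + cscale q u2" using range by blast
    show ?thesis
      by (rule cinner_ext)
         (simp add: pq bop_apply_pair[OF R Ru] cinner_add_left cinner_diff_left cinner_scale_left
           algebra_simps)
  qed
  then show "cspectrum R \<subseteq> {0, \<mu>1, \<mu>2}"
  proof (intro subsetI)
    fix w
    assume "w \<in> cspectrum R"
    with cspectrum_root_of_cubic_relation[OF R] \<open>\<And>x. R (R (R x)) = _\<close>
    have "w^3 - (m11 + m22) * w\<^sup>2 + (m11 * m22 - m12 * m21) * w = 0" by blast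
    then have "w * ((w - \<mu>1) * (w - \<mu>2)) = 0"
      unfolding mu(2)[symmetric] mu(3)[symmetric]
      by (simp add: algebra_simps power2_eq_square power3_eq_cube)
    then show "w \<in> {0, \<mu>1, \<mu>2}" by auto
  qed
qed

definition pairing_det :: "'a::chilbert \<Rightarrow> 'a \<Rightarrow> 'a \<Rightarrow> 'a \<Rightarrow> complex" where
  "pairing_det u1 u2 g1 g2 = cinner u1 g1 * cinner u2 g2 - cinner u2 g1 * cinner u1 g2"

definition biorthogonal :: "'a::chilbert \<Rightarrow> 'a \<Rightarrow> 'a \<Rightarrow> 'a \<Rightarrow> bool" where
  "biorthogonal u1 u2 g1 g2 \<longleftrightarrow>
     cinner u1 g1 = 1 \<and> cinner u2 g1 = 0 \<and> cinner u1 g2 = 0 \<and> cinner u2 g2 = 1"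

lemma indep2_if_biorthogonal:
  assumes "biorthogonal u1 u2 g1 g2"
  shows "indep2 u1 u2"
  unfolding indep2_def
proof (intro allI impI)
  fix p q
  assume "cscale p u1 + cscale q u2 = 0"
  then have "cinner (cscale p u1 + cscale q u2) g1 = 0" "cinner (cscale p u1 + cscale q u2) g2 = 0"
    by simp_all
  then show "p = 0 \<and> q = 0"
    using assms by (simp add: biorthogonal_def cinner_add_left cinner_scale_left)
qed

lemma indep2_if_indep2_image:
  assumes "bop C" "indep2 (C x1) (C x2)"
  shows "indep2 x1 x2"
  unfolding indep2_def
proof (intro allI impI)
  fix p q
  assume "cscale p x1 + cscale q x2 = 0"
  then have "cscale p (C x1) + cscale q (C x2) = 0"
    using assms(1) by (metis bop_add bop_cscale bop_zero)
  then show "p = 0 \<and> q = 0" using assms(2) by (auto simp: indep2_def)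
qed

lemma indep2_image_if_not_rank_le_one:
  assumes "\<not> rank_le_one C"
  obtains x1 x2 where "indep2 (C x1) (C x2)"
proof -
  from assms have nr: "\<forall>b. \<exists>x. \<forall>c. C x \<noteq> cscale c b" by (auto simp: rank_le_one_def)
  then obtain x1 where "C x1 \<noteq> 0" by fastforce
  obtain x2 where x2: "\<forall>c. C x2 \<noteq> cscale c (C x1)" using nr by blast
  have "indep2 (C x1) (C x2)"
    unfolding indep2_def
  proof (intro allI impI)
    fix p q
    assume h: "cscale p (C x1) + cscale q (C x2) = 0"
    have "q = 0"
    proof (rule ccontr)
      assume "q \<noteq> 0"
      have "cscale q (C x2) = - cscale p (C x1)"
        using h by (simp add: eq_neg_iff_add_eq_0 add.commute)
      then have "cscale (inverse q) (cscale q (C x2)) = cscale (inverse q) (- cscale p (C x1))"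
        by simp
      then have "C x2 = cscale (- (inverse q * p)) (C x1)"
        using \<open>q \<noteq> 0\<close> by (simp add: cscale_mult cscale_minus_right cscale_minus_left)
      with x2 show False by blast
    qed
    with h \<open>C x1 \<noteq> 0\<close> show "p = 0 \<and> q = 0" by simp
  qed
  then show thesis by (rule that)
qed

lemma pairing_det_self_neq_0:
  assumes "indep2 v1 v2"
  shows "pairing_det v1 v2 v1 v2 \<noteq> 0"
proof
  assume det: "pairing_det v1 v2 v1 v2 = 0"
  define a where "a = cinner v1 v1"
  define b where "b = cinner v2 v1"
  \<comment> \<open>The Gram determinant is the squared norm of \<open>a v2 - b v1\<close>, up to the factor \<open>a\<close>.\<close>
  define w where "w = cscale a v2 - cscale b v1"
  have "cinner w w = a * pairing_det v1 v2 v1 v2"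
    unfolding w_def pairing_det_def
    by (simp add: cinner_diff_left cinner_diff_right cinner_scale_left cinner_scale_right
        cinner_commute[of v1 v2] a_def[symmetric] b_def[symmetric] algebra_simps)
       (simp add: a_def)
  then have "cscale (- b) v1 + cscale a v2 = 0"
    using det by (simp add: w_def cscale_minus_left)
  then have "a = 0" using assms by (auto simp: indep2_def)
  then have "cscale 1 v1 + cscale 0 v2 = 0" by (simp add: a_def)
  then show False using assms unfolding indep2_def by (metis one_neq_zero)
qed

lemma pairing_det_lincomb:
  "pairing_det (cscale a x1 + cscale b x2) (cscale c x1 + cscale e x2) g1 g2
     = (a * e - b * c) * pairing_det x1 x2 g1 g2"
  by (simp add: pairing_det_def cinner_add_left cinner_scale_left algebra_simps)

lemma exists_common_nonroot_of_pencil_dets: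
  fixes h11 h12 h21 h22 k11 k12 k21 k22 l11 l12 l21 l22 m11 m12 m21 m22 :: complex
  assumes "h11 * h22 - h12 * h21 \<noteq> 0" "m11 * m22 - m12 * m21 \<noteq> 0"
  obtains \<sigma> where
    "(h11 + \<sigma> * k11) * (h22 + \<sigma> * k22) - (h12 + \<sigma> * k12) * (h21 + \<sigma> * k21) \<noteq> 0"
    "(l11 + \<sigma> * m11) * (l22 + \<sigma> * m22) - (l12 + \<sigma> * m12) * (l21 + \<sigma> * m21) \<noteq> 0"
proof -
  \<comment> \<open>Both determinants are polynomials in \<open>\<sigma>\<close>, nonzero by their constant resp. leading
    coefficient, so together they have only finitely many roots.\<close>
  define pH where "pH = [:h11, k11:] * [:h22, k22:] - [:h12, k12:] * [:h21, k21:]"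
  define pL where "pL = [:l11, m11:] * [:l22, m22:] - [:l12, m12:] * [:l21, m21:]"
  have pH: "poly pH \<sigma> = (h11 + \<sigma> * k11) * (h22 + \<sigma> * k22) - (h12 + \<sigma> * k12) * (h21 + \<sigma> * k21)"
    for \<sigma> by (simp add: pH_def algebra_simps)
  have pL: "poly pL \<sigma> = (l11 + \<sigma> * m11) * (l22 + \<sigma> * m22) - (l12 + \<sigma> * m12) * (l21 + \<sigma> * m21)"
    for \<sigma> by (simp add: pL_def algebra_simps)
  have "pH \<noteq> 0" using pH[of 0] assms(1) by auto
  moreover have "coeff pL 2 = m11 * m22 - m12 * m21"
    by (simp add: pL_def numeral_2_eq_2 algebra_simps)
  then have "pL \<noteq> 0" using assms(2) by auto
  ultimately have "finite {x. poly (pH * pL) x = 0}" by (simp add: poly_roots_finite)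
  then obtain \<sigma> where "poly (pH * pL) \<sigma> \<noteq> 0"
    using ex_new_if_finite[OF infinite_UNIV_char_0[where 'a=complex]] by blast
  then have "poly pH \<sigma> \<noteq> 0" "poly pL \<sigma> \<noteq> 0" by auto
  then show thesis using that unfolding pH pL by blast
qed

lemma exists_functionals_pairing_det_neq_0:
  assumes "indep2 x1 x2" "indep2 y1 y2"
  obtains g1 g2 where "pairing_det x1 x2 g1 g2 \<noteq> 0" "pairing_det y1 y2 g1 g2 \<noteq> 0"
proof -
  obtain \<sigma> where
    "(cinner x1 x1 + \<sigma> * cinner x1 y1) * (cinner x2 x2 + \<sigma> * cinner x2 y2)
       - (cinner x2 x1 + \<sigma> * cinner x2 y1) * (cinner x1 x2 + \<sigma> * cinner x1 y2) \<noteq> 0"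
    "(cinner y1 x1 + \<sigma> * cinner y1 y1) * (cinner y2 x2 + \<sigma> * cinner y2 y2)
       - (cinner y2 x1 + \<sigma> * cinner y2 y1) * (cinner y1 x2 + \<sigma> * cinner y1 y2) \<noteq> 0"
    using pairing_det_self_neq_0[OF assms(1)] pairing_det_self_neq_0[OF assms(2)]
    unfolding pairing_det_def by (rule exists_common_nonroot_of_pencil_dets)
  then show thesis
    by (intro that[of "x1 + cscale (cnj \<sigma>) y1" "x2 + cscale (cnj \<sigma>) y2"])
       (simp_all add: pairing_det_def cinner_add_right cinner_scale_right)
qed

lemma exists_biorthogonal_pair:
  assumes C: "bop C"
    and dx: "pairing_det x1 x2 g1 g2 \<noteq> 0" and dy: "pairing_det (C x1) (C x2) g1 g2 \<noteq> 0"
  obtains u1 u2 where "biorthogonal u1 u2 g1 g2" "pairing_det (C u1) (C u2) g1 g2 \<noteq> 0"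
proof -
  \<comment> \<open>Invert the \<open>2 \<times> 2\<close> matrix \<open>(\<langle>x\<^sub>j, g\<^sub>i\<rangle>)\<close>; the determinant of \<open>(\<langle>C u\<^sub>j, g\<^sub>i\<rangle>)\<close> is then
    the quotient \<open>dy / dx\<close>.\<close>
  define H11 where "H11 = cinner x1 g1"
  define H12 where "H12 = cinner x2 g1"
  define H21 where "H21 = cinner x1 g2"
  define H22 where "H22 = cinner x2 g2"
  define d where "d = pairing_det x1 x2 g1 g2"
  have d: "d = H11 * H22 - H12 * H21" "d \<noteq> 0"
    using dx by (simp_all add: d_def pairing_det_def H11_def H12_def H21_def H22_def)
  define u1 where "u1 = cscale (H22 / d) x1 + cscale (- H21 / d) x2"
  define u2 where "u2 = cscale (- H12 / d) x1 + cscale (H11 / d) x2"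
  have "biorthogonal u1 u2 g1 g2"
    using d unfolding biorthogonal_def u1_def u2_def
    by (simp add: cinner_add_left cinner_scale_left H11_def[symmetric] H12_def[symmetric]
        H21_def[symmetric] H22_def[symmetric] field_simps)
  moreover have "pairing_det (C u1) (C u2) g1 g2 = pairing_det (C x1) (C x2) g1 g2 / d"
  proof -
    have "H22 / d * (H11 / d) - - H21 / d * (- H12 / d) = (H11 * H22 - H12 * H21) / (d * d)"
      by (simp add: diff_divide_distrib mult.commute)
    also have "\<dots> = 1 / d"
      using d by simp
    finally have "H22 / d * (H11 / d) - - H21 / d * (- H12 / d) = 1 / d" .
    then show ?thesis
      using C by (simp add: u1_def u2_def bop_add bop_cscale pairing_det_lincomb)
  qed
  ultimately show thesis
    using that dy d by simp
qed

lemma exists_scaling_with_equimodular_eigenvalues: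
  fixes G11 G12 G21 G22 :: complex
  assumes det: "G11 * G22 - G12 * G21 \<noteq> 0"
  obtains a b \<mu>1 \<mu>2 where "\<mu>1 \<noteq> \<mu>2" "cmod \<mu>1 = cmod \<mu>2" "\<mu>1 \<noteq> 0"
    "\<mu>1 + \<mu>2 = a * G11 + b * G22" "\<mu>1 * \<mu>2 = (a * G11) * (b * G22) - (a * G12) * (b * G21)"
proof -
  note result = that
  \<comment> \<open>If \<open>diag(a, b) G\<close> can be made traceless, its eigenvalues are \<open>\<plusminus>\<mu>\<close>.\<close>
  have traceless: thesis if ab: "a \<noteq> 0" "b \<noteq> 0" "a * G11 + b * G22 = 0" for a b
  proof -
    define D where "D = (a * G11) * (b * G22) - (a * G12) * (b * G21)"
    have "D = a * b * (G11 * G22 - G12 * G21)" by (simp add: D_def algebra_simps)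
    then have "D \<noteq> 0" using ab det by simp
    define \<mu> where "\<mu> = csqrt (- D)"
    have "\<mu> \<noteq> 0" using \<open>D \<noteq> 0\<close> by (simp add: \<mu>_def)
    moreover have "\<mu> * (- \<mu>) = D"
      using power2_csqrt[of "- D"] by (simp add: \<mu>_def power2_eq_square)
    ultimately show thesis
      using ab by (intro result[of \<mu> "- \<mu>" a b]) (simp_all add: D_def)
  qed
  \<comment> \<open>Otherwise exactly one diagonal entry vanishes, and we aim at the eigenvalues \<open>1 \<plusminus> \<i>\<close>.\<close>
  have one_pm_ii: "(1 + \<i>) \<noteq> (1 - \<i>)" "cmod (1 + \<i>) = cmod (1 - \<i>)" "(1 + \<i>) \<noteq> 0"
    "(1 + \<i>) * (1 - \<i>) = 2"
    by (simp_all add: complex_eq_iff cmod_def algebra_simps)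
  consider "G11 = 0" "G22 = 0" | "G11 \<noteq> 0" "G22 \<noteq> 0" | "G11 \<noteq> 0" "G22 = 0" | "G11 = 0" "G22 \<noteq> 0"
    by blast
  then show thesis
  proof cases
    case 1
    then show thesis using traceless[of 1 1] by simp
  next
    case 2
    then show thesis using traceless[of G22 "- G11"] by (simp add: algebra_simps)
  next
    case 3
    then have "G12 * G21 \<noteq> 0" using det by auto
    define a where "a = 2 / G11"
    define b where "b = - G11 / (G12 * G21)"
    have "(1 + \<i>) + (1 - \<i>) = a * G11 + b * G22" using 3 by (simp add: a_def)
    moreover have "(1 + \<i>) * (1 - \<i>) = (a * G11) * (b * G22) - (a * G12) * (b * G21)"
      using 3 \<open>G12 * G21 \<noteq> 0\<close> by (simp add: one_pm_ii(4) a_def b_def field_simps)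
    ultimately show thesis using one_pm_ii(1-3) by (intro result)
  next
    case 4
    then have "G12 * G21 \<noteq> 0" using det by auto
    define a where "a = - G22 / (G12 * G21)"
    define b where "b = 2 / G22"
    have "(1 + \<i>) + (1 - \<i>) = a * G11 + b * G22" using 4 by (simp add: b_def)
    moreover have "(1 + \<i>) * (1 - \<i>) = (a * G11) * (b * G22) - (a * G12) * (b * G21)"
      using 4 \<open>G12 * G21 \<noteq> 0\<close> by (simp add: one_pm_ii(4) a_def b_def field_simps)
    ultimately show thesis using one_pm_ii(1-3) by (intro result)
  qed
qed

definition rank_two_op :: "'a::chilbert \<Rightarrow> 'a \<Rightarrow> 'a \<Rightarrow> 'a \<Rightarrow> complex \<Rightarrow> complex \<Rightarrow> 'a \<Rightarrow> 'a"
  where "rank_two_op u1 u2 g1 g2 a b = (\<lambda>x. cscale (a * cinner x g1) u1 + cscale (b * cinner x g2) u2)"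

lemma bop_rank_two_op: "bop (rank_two_op u1 u2 g1 g2 a b)"
proof -
  have "bop (\<lambda>x. cscale a (cscale (cinner x g1) u1) + cscale b (cscale (cinner x g2) u2))"
    by (intro bop_add_op bop_cscale_op bop_rank_one_op)
  then show ?thesis by (simp add: rank_two_op_def cscale_mult)
qed

lemma crank_rank_two_op: "crank (rank_two_op u1 u2 g1 g2 a b) \<le> 2"
  by (rule crank_le_2) (auto simp: rank_two_op_def)

lemma funpow_rank_two_op:
  assumes "biorthogonal u1 u2 g1 g2" "k \<noteq> 0"
  shows "rank_two_op u1 u2 g1 g2 a b ^^ k = rank_two_op u1 u2 g1 g2 (a ^ k) (b ^ k)"
  using assms(2)
proof (induction k)
  case (Suc k)
  show ?case
  proof (cases "k = 0")
    case False
    with Suc.IH show ?thesis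
      using assms(1)
      by (simp add: rank_two_op_def biorthogonal_def fun_eq_iff cinner_add_left cinner_scale_left
          mult.assoc)
  qed simp
qed simp

lemma cspectrum_sandwich_funpow:
  assumes "bop X" "bop C" "w \<noteq> 0"
  shows "w \<in> cspectrum ((X ^^ r) \<circ> C \<circ> (X ^^ s)) \<longleftrightarrow> w \<in> cspectrum ((X ^^ (r + s)) \<circ> C)"
proof -
  have "bop (X ^^ r)" "bop (C \<circ> X ^^ s)" "bop (X ^^ (r + s))"
    using assms by (simp_all add: bop_funpow bop_comp)
  moreover have "X ^^ (r + s) = X ^^ s \<circ> X ^^ r"
    by (subst add.commute) (rule funpow_add)
  then have "(C \<circ> X ^^ s) \<circ> X ^^ r = C \<circ> X ^^ (r + s)"
    by (simp add: o_assoc)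
  ultimately show ?thesis
    using assms cspectrum_comp_commute
    by (metis (no_types, lifting) o_assoc)
qed

lemma cspectrum_rank_two_compression:
  assumes C: "bop C" and bi: "biorthogonal u1 u2 g1 g2"
    and mu: "\<mu>1 \<noteq> \<mu>2" "\<mu>1 + \<mu>2 = a * cinner (C u1) g1 + b * cinner (C u2) g2"
      "\<mu>1 * \<mu>2 = (a * cinner (C u1) g1) * (b * cinner (C u2) g2)
                  - (a * cinner (C u2) g1) * (b * cinner (C u1) g2)"
  shows "cspectrum (rank_two_op u1 u2 g1 g2 a b \<circ> C) \<subseteq> {0, \<mu>1, \<mu>2}"
    and "\<mu>1 \<in> cspectrum (rank_two_op u1 u2 g1 g2 a b \<circ> C)"
    and "\<mu>2 \<in> cspectrum (rank_two_op u1 u2 g1 g2 a b \<circ> C)"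
proof -
  let ?R = "rank_two_op u1 u2 g1 g2 a b \<circ> C"
  have "bop ?R" using C by (intro bop_comp bop_rank_two_op)
  moreover have "\<exists>p q. ?R x = cscale p u1 + cscale q u2" for x
    by (auto simp: rank_two_op_def)
  moreover have "?R u1 = cscale (a * cinner (C u1) g1) u1 + cscale (b * cinner (C u1) g2) u2"
    "?R u2 = cscale (a * cinner (C u2) g1) u1 + cscale (b * cinner (C u2) g2) u2"
    by (simp_all add: rank_two_op_def)
  ultimately show "cspectrum ?R \<subseteq> {0, \<mu>1, \<mu>2}" "\<mu>1 \<in> cspectrum ?R" "\<mu>2 \<in> cspectrum ?R"
    using cspectrum_pair_operator[OF _ indep2_if_biorthogonal[OF bi] _ _ _ mu] by blast+
qed

lemma exists_rank_two_with_two_point_periph_spectrum: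
  assumes C: "bop C" and "\<not> rank_le_one C" and "r + s \<ge> 1"
  obtains B where "bop B" "crank B \<le> 2" "\<not> (\<exists>z. periph_spectrum ((B ^^ r) \<circ> C \<circ> (B ^^ s)) = {z})"
proof -
  obtain x1 x2 where ind: "indep2 (C x1) (C x2)"
    using indep2_image_if_not_rank_le_one[OF \<open>\<not> rank_le_one C\<close>] .
  obtain g1 g2 where "pairing_det x1 x2 g1 g2 \<noteq> 0" "pairing_det (C x1) (C x2) g1 g2 \<noteq> 0"
    using exists_functionals_pairing_det_neq_0[OF indep2_if_indep2_image[OF C ind] ind] .
  then obtain u1 u2 where bi: "biorthogonal u1 u2 g1 g2"
    and det: "pairing_det (C u1) (C u2) g1 g2 \<noteq> 0"
    using exists_biorthogonal_pair[OF C] by blast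
  obtain a b \<mu>1 \<mu>2 where mu: "\<mu>1 \<noteq> \<mu>2" "cmod \<mu>1 = cmod \<mu>2" "\<mu>1 \<noteq> 0"
    "\<mu>1 + \<mu>2 = a * cinner (C u1) g1 + b * cinner (C u2) g2"
    "\<mu>1 * \<mu>2 = (a * cinner (C u1) g1) * (b * cinner (C u2) g2)
                - (a * cinner (C u2) g1) * (b * cinner (C u1) g2)"
    using det unfolding pairing_det_def by (rule exists_scaling_with_equimodular_eigenvalues)
  have "r + s \<noteq> 0" using \<open>r + s \<ge> 1\<close> by linarith
  obtain \<alpha> \<beta> where "a = \<alpha> ^ (r + s)" "b = \<beta> ^ (r + s)"
    using exists_complex_root[OF \<open>r + s \<noteq> 0\<close>] by metis
  define B where "B = rank_two_op u1 u2 g1 g2 \<alpha> \<beta>"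
  define T where "T = (B ^^ r) \<circ> C \<circ> (B ^^ s)"
  have "B ^^ (r + s) = rank_two_op u1 u2 g1 g2 a b"
    using funpow_rank_two_op[OF bi \<open>r + s \<noteq> 0\<close>] \<open>a = _\<close> \<open>b = _\<close> by (simp add: B_def)
  \<comment> \<open>Away from \<open>0\<close>, \<open>T\<close> has the spectrum of the compression \<open>B\<^sup>r\<^sup>+\<^sup>s C\<close>.\<close>
  then have T_R: "w \<in> cspectrum T \<longleftrightarrow> w \<in> cspectrum (rank_two_op u1 u2 g1 g2 a b \<circ> C)"
    if "w \<noteq> 0" for w
    using cspectrum_sandwich_funpow[OF bop_rank_two_op C that] by (simp add: T_def B_def)
  note R = cspectrum_rank_two_compression[OF C bi mu(1,4,5)]
  have "\<mu>2 \<noteq> 0" using mu(2,3) by auto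
  have "periph_spectrum T = {\<mu>1, \<mu>2}"
  proof (rule periph_spectrum_eqI)
    show "cspectrum T \<subseteq> insert 0 {\<mu>1, \<mu>2}"
      using T_R R(1) by blast
    show "{\<mu>1, \<mu>2} \<subseteq> cspectrum T"
      using T_R[OF \<open>\<mu>1 \<noteq> 0\<close>] T_R[OF \<open>\<mu>2 \<noteq> 0\<close>] R(2,3) by blast
  qed (use mu(2) in auto)
  then have "\<not> (\<exists>z. periph_spectrum T = {z})"
    using mu(1) by (auto simp: doubleton_eq_iff)
  then show thesis
    using that[of B] by (simp add: B_def T_def bop_rank_two_op crank_rank_two_op)
qed

lemma mem_standard_op_alg_if_crank_le_2:
  assumes "standard_op_alg \<A>" "bop B" "crank B \<le> 2"
  shows "B \<in> \<A>"
proof -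
  from assms(3) have "crank B < \<infinity>" by (cases "crank B") simp_all
  with assms(1,2) show ?thesis by (simp add: standard_op_alg_def)
qed

theorem lemma3p3:
  fixes \<A> :: "('a::chilbert \<Rightarrow> 'a) set" and r s :: nat and A :: "'a \<Rightarrow> 'a"
  assumes dim2: "\<forall>x::'a. \<exists>y. \<forall>c. y \<noteq> cscale c x"
    and std: "standard_op_alg \<A>"
    and rs: "r + s \<ge> 1"
    and A: "A \<in> \<A>" "A \<noteq> (\<lambda>_. 0)"
  shows "(crank A = 1 \<longleftrightarrow>
            (\<forall>B\<in>\<A>. \<exists>z. periph_spectrum ((B ^^ r) \<circ> cadj A \<circ> (B ^^ s)) = {z}))
       \<and> ((\<forall>B\<in>\<A>. \<exists>z. periph_spectrum ((B ^^ r) \<circ> cadj A \<circ> (B ^^ s)) = {z}) \<longleftrightarrow>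
            (\<forall>B\<in>\<A>. crank B \<le> 2 \<longrightarrow>
               (\<exists>z. periph_spectrum ((B ^^ r) \<circ> cadj A \<circ> (B ^^ s)) = {z})))"
proof -
  have bop_A: "bop A" and bop_\<A>: "\<And>B. B \<in> \<A> \<Longrightarrow> bop B"
    using std A(1) by (auto simp: standard_op_alg_def)
  have "\<exists>z. periph_spectrum ((B ^^ r) \<circ> cadj A \<circ> (B ^^ s)) = {z}"
    if "rank_le_one A" "B \<in> \<A>" for B
    using that bop_A bop_\<A>[OF \<open>B \<in> \<A>\<close>] dim2
    by (intro periph_spectrum_singleton_if_rank_le_one bop_comp bop_funpow bop_cadj
        rank_le_one_comp) (simp_all add: rank_le_one_cadj_iff)
  moreover have "rank_le_one A"
    if "\<forall>B\<in>\<A>. crank B \<le> 2 \<longrightarrow> (\<exists>z. periph_spectrum ((B ^^ r) \<circ> cadj A \<circ> (B ^^ s)) = {z})"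
  proof (rule ccontr)
    assume "\<not> rank_le_one A"
    then have "\<not> rank_le_one (cadj A)" using rank_le_one_cadj_iff[OF bop_A] by simp
    then obtain B where "bop B" "crank B \<le> 2"
      "\<not> (\<exists>z. periph_spectrum ((B ^^ r) \<circ> cadj A \<circ> (B ^^ s)) = {z})"
      using exists_rank_two_with_two_point_periph_spectrum[OF bop_cadj[OF bop_A] _ rs] by blast
    then show False
      using that mem_standard_op_alg_if_crank_le_2[OF std] by blast
  qed
  ultimately show ?thesis
    using crank_eq_1_iff[OF A(2)] by blast
qed

end
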